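(* Every interbank lending game $G=(m,n,\boldsymbol{c},\boldsymbol{d},r_{\max},r_{\min})$ has a unique pure Nash equilibrium.
   Context: An interbank lending game $G=(m,n,\boldsymbol{c},\boldsymbol{d},r_{\max},r_{\min})$ consists of positive integers $m,n$, budgets $\boldsymbol{c}\in\mathbb{R}_{>0}^m$, demands $\boldsymbol{d}\in\mathbb{R}_{>0}^n$ and reals $0<r_{\min}<r_{\max}$. The players are the lenders $L=\{1,\dots,m\}$; $B=\{1,\dots,n\}$ is the set of borrowers. Lender $i$'s strategy set is $S_i=\{s_i\in\mathbb{R}_{\ge0}^n:\sum_{j\in B}s_{ij}\le c_i\}$, the strategy space is $\boldsymbol{S}=\prod_{i\in L}S_i$ with elements $\boldsymbol{s}=(s_{ij})_{i\in L,j\in B}$. The interest rate of borrower $j$ is $r_j(\boldsymbol{s})=(r_{\min}-r_{\max})\frac{\sum_{i\in L}s_{ij}}{d_j}+r_{\max}$ and lender $i$'s utility is $u_i(\boldsymbol{s})=\sum_{j\in B}(r_j(\boldsymbol{s})-r_{\min})s_{ij}$. A pure Nash equilibrium is a profile $\boldsymbol{s}^*\in\boldsymbol{S}$ such that $u_i(\boldsymbol{s}^* )\ge u_i(s_i,\boldsymbol{s}^*_{-i})$ for every $i\in L$ and every $s_i\in S_i$, where $(s_i,\boldsymbol{s}^*_{-i})$ denotes $\boldsymbol{s}^*$ with lender $i$'s strategy replaced by $s_i$. *)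

theory Defs
  imports "HOL-Analysis.Analysis"
begin

text \<open>Lenders are indexed by {0..<m}, borrowers by {0..<n}. A profile is
  s :: nat \<Rightarrow> nat \<Rightarrow> real with s i j the amount lender i lends to borrower j;
  entries outside the index ranges are required to be 0 (canonical representation).\<close>

definition strategy :: "nat \<Rightarrow> real \<Rightarrow> (nat \<Rightarrow> real) \<Rightarrow> bool" where
  "strategy n c_i si \<longleftrightarrow> (\<forall>j<n. si j \<ge> 0) \<and> (\<forall>j\<ge>n. si j = 0) \<and> (\<Sum>j<n. si j) \<le> c_i"

definition profile_space :: "nat \<Rightarrow> nat \<Rightarrow> (nat \<Rightarrow> real) \<Rightarrow> (nat \<Rightarrow> nat \<Rightarrow> real) set" where
  "profile_space m n c = {s. (\<forall>i<m. strategy n (c i) (s i)) \<and> (\<forall>i\<ge>m. \<forall>j. s i j = 0)}"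

definition interest_rate :: "nat \<Rightarrow> (nat \<Rightarrow> real) \<Rightarrow> real \<Rightarrow> real \<Rightarrow> (nat \<Rightarrow> nat \<Rightarrow> real) \<Rightarrow> nat \<Rightarrow> real" where
  "interest_rate m d rmax rmin s j = (rmin - rmax) * (\<Sum>i<m. s i j) / d j + rmax"

definition utility :: "nat \<Rightarrow> nat \<Rightarrow> (nat \<Rightarrow> real) \<Rightarrow> real \<Rightarrow> real \<Rightarrow> (nat \<Rightarrow> nat \<Rightarrow> real) \<Rightarrow> nat \<Rightarrow> real" where
  "utility m n d rmax rmin s i = (\<Sum>j<n. (interest_rate m d rmax rmin s j - rmin) * s i j)"

definition pure_nash :: "nat \<Rightarrow> nat \<Rightarrow> (nat \<Rightarrow> real) \<Rightarrow> (nat \<Rightarrow> real) \<Rightarrow> real \<Rightarrow> real \<Rightarrow> (nat \<Rightarrow> nat \<Rightarrow> real) \<Rightarrow> bool" where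
  "pure_nash m n c d rmax rmin s \<longleftrightarrow> s \<in> profile_space m n c \<and>
     (\<forall>i<m. \<forall>si. strategy n (c i) si \<longrightarrow>
        utility m n d rmax rmin s i \<ge> utility m n d rmax rmin (s(i := si)) i)"

end

theory Submission
  imports Defs
begin

(* With a = rmax - rmin and L_j = sum_i s_ij the total amount borrowed by j, a unilateral
   deviation of lender i changes its utility exactly as much as it changes the potential
   P(s) = sum_j (a L_j - a/(2 d_j) (L_j^2 + sum_i s_ij^2)).
   P is a concave quadratic: P(s') = P(s) + <grad P(s), s' - s> - C(s' - s) with C positive
   definite. A maximiser of P over the compact profile space is therefore an equilibrium.
   Conversely, at an equilibrium no lender gains by moving a small fraction towards any other
   strategy, so <grad P(s), s' - s> <= 0 and P(s') <= P(s) - C(s' - s): every equilibrium is a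
   strict global maximiser of P, hence there is only one. *)

definition borrowed :: "nat \<Rightarrow> (nat \<Rightarrow> nat \<Rightarrow> real) \<Rightarrow> nat \<Rightarrow> real" where
  "borrowed m s j = (\<Sum>i<m. s i j)"

lemma borrowed_update:
  assumes "i < m"
  shows "borrowed m (s(i := y)) j = borrowed m s j + (y j - s i j)"
proof -
  have "(s(i := y)) k j = s k j + (if k = i then y j - s i j else 0)" for k
    by simp
  then show ?thesis
    using assms by (simp add: borrowed_def sum.distrib)
qed

lemma interest_rate_borrowed:
  "interest_rate m d rmax rmin s j = (rmin - rmax) * borrowed m s j / d j + rmax"
  by (simp add: interest_rate_def borrowed_def)

definition potential :: "nat \<Rightarrow> nat \<Rightarrow> (nat \<Rightarrow> real) \<Rightarrow> real \<Rightarrow> (nat \<Rightarrow> nat \<Rightarrow> real) \<Rightarrow> real" where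
  "potential m n d a s =
     (\<Sum>j<n. a * borrowed m s j - a / (2 * d j) * ((borrowed m s j)\<^sup>2 + (\<Sum>i<m. (s i j)\<^sup>2)))"

(* The derivative of the potential, and of lender i's utility, when row i of s moves along v. *)
definition marginal_gain ::
    "nat \<Rightarrow> nat \<Rightarrow> (nat \<Rightarrow> real) \<Rightarrow> real \<Rightarrow> (nat \<Rightarrow> nat \<Rightarrow> real) \<Rightarrow> nat \<Rightarrow> (nat \<Rightarrow> real) \<Rightarrow> real" where
  "marginal_gain m n d a s i v = (\<Sum>j<n. v j * (a - a * (borrowed m s j + s i j) / d j))"

definition potential_curvature :: "nat \<Rightarrow> nat \<Rightarrow> (nat \<Rightarrow> real) \<Rightarrow> real \<Rightarrow> (nat \<Rightarrow> nat \<Rightarrow> real) \<Rightarrow> real" where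
  "potential_curvature m n d a h =
     (\<Sum>j<n. a / (2 * d j) * ((borrowed m h j)\<^sup>2 + (\<Sum>i<m. (h i j)\<^sup>2)))"

lemma potential_expansion:
  assumes "\<forall>j<n. d j \<noteq> 0"
  shows "potential m n d a s' =
           potential m n d a s + (\<Sum>i<m. marginal_gain m n d a s i (\<lambda>j. s' i j - s i j))
           - potential_curvature m n d a (\<lambda>i j. s' i j - s i j)"
proof -
  define h where "h = (\<lambda>i j. s' i j - s i j)"
  have column:
    "a * borrowed m s' j - a / (2 * d j) * ((borrowed m s' j)\<^sup>2 + (\<Sum>i<m. (s' i j)\<^sup>2)) =
       a * borrowed m s j - a / (2 * d j) * ((borrowed m s j)\<^sup>2 + (\<Sum>i<m. (s i j)\<^sup>2))
       + (\<Sum>i<m. h i j * (a - a * (borrowed m s j + s i j) / d j))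
       - a / (2 * d j) * ((borrowed m h j)\<^sup>2 + (\<Sum>i<m. (h i j)\<^sup>2))" if "j < n" for j
  proof -
    have total: "borrowed m s' j = borrowed m s j + borrowed m h j"
      by (simp add: borrowed_def h_def sum_subtractf)
    have squares: "(\<Sum>i<m. (s' i j)\<^sup>2) =
        (\<Sum>i<m. (s i j)\<^sup>2) + 2 * (\<Sum>i<m. s i j * h i j) + (\<Sum>i<m. (h i j)\<^sup>2)"
      by (simp add: h_def power2_eq_square algebra_simps sum.distrib sum_subtractf sum_distrib_left)
    have linear: "(\<Sum>i<m. h i j * (a - a * (borrowed m s j + s i j) / d j)) =
        a * borrowed m h j - a * borrowed m s j / d j * borrowed m h j
        - a / d j * (\<Sum>i<m. s i j * h i j)"
    proof -
      have "h i j * (a - a * (borrowed m s j + s i j) / d j) =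
          a * h i j - a * borrowed m s j / d j * h i j - a / d j * (s i j * h i j)" for i
        using assms that by (simp add: field_simps)
      then show ?thesis
        by (simp only: sum_subtractf sum_distrib_left borrowed_def[of m h])
    qed
    show ?thesis
      using assms that unfolding total squares linear by (simp add: field_simps power2_eq_square)
  qed
  have "potential m n d a s' = potential m n d a s
      + (\<Sum>j<n. \<Sum>i<m. h i j * (a - a * (borrowed m s j + s i j) / d j))
      - potential_curvature m n d a h"
    unfolding potential_def potential_curvature_def sum.distrib[symmetric] sum_subtractf[symmetric]
    by (rule sum.cong) (simp_all only: column lessThan_iff)
  also have "(\<Sum>j<n. \<Sum>i<m. h i j * (a - a * (borrowed m s j + s i j) / d j)) =
      (\<Sum>i<m. marginal_gain m n d a s i (h i))"
    unfolding marginal_gain_def by (rule sum.swap)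
  finally show ?thesis
    by (simp add: h_def)
qed

lemma potential_curvature_nonneg:
  assumes "a \<ge> 0" and "\<forall>j<n. d j > 0"
  shows "potential_curvature m n d a h \<ge> 0"
  unfolding potential_curvature_def using assms
  by (auto intro!: sum_nonneg mult_nonneg_nonneg add_nonneg_nonneg divide_nonneg_pos)

lemma potential_curvature_eq_0D:
  assumes "a > 0" and "\<forall>j<n. d j > 0" and "potential_curvature m n d a h = 0"
    and "i < m" and "j < n"
  shows "h i j = 0"
proof -
  define f where "f j = a / (2 * d j) * ((borrowed m h j)\<^sup>2 + (\<Sum>k<m. (h k j)\<^sup>2))" for j
  have "\<forall>j\<in>{..<n}. f j \<ge> 0"
    using assms(1,2) by (auto simp: f_def intro!: mult_nonneg_nonneg add_nonneg_nonneg sum_nonneg divide_nonneg_pos)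
  moreover have "(\<Sum>j<n. f j) = 0"
    using assms(3) by (simp add: f_def potential_curvature_def)
  ultimately have "f j = 0"
    using assms(5) sum_nonneg_eq_0_iff[of "{..<n}" f] by simp
  then have "(borrowed m h j)\<^sup>2 + (\<Sum>k<m. (h k j)\<^sup>2) = 0"
    using assms by (auto simp: f_def)
  then have "(\<Sum>k<m. (h k j)\<^sup>2) = 0"
    by (simp add: add_nonneg_eq_0_iff sum_nonneg)
  then show ?thesis
    using assms(4) by (simp add: sum_nonneg_eq_0_iff)
qed

lemma potential_update:
  assumes "i < m" and "\<forall>j<n. d j \<noteq> 0"
  shows "potential m n d a (s(i := y)) =
           potential m n d a s + marginal_gain m n d a s i (\<lambda>j. y j - s i j)
           - (\<Sum>j<n. a * (y j - s i j)\<^sup>2 / d j)"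
proof -
  have row: "(s(i := y)) k j - s k j = (if k = i then y j - s i j else 0)" for k j
    by simp
  have "marginal_gain m n d a s k (\<lambda>j. (s(i := y)) k j - s k j) =
        (if k = i then marginal_gain m n d a s i (\<lambda>j. y j - s i j) else 0)" for k
    by (simp add: row marginal_gain_def)
  then have "(\<Sum>k<m. marginal_gain m n d a s k (\<lambda>j. (s(i := y)) k j - s k j)) =
        marginal_gain m n d a s i (\<lambda>j. y j - s i j)"
    using assms(1) by simp
  moreover have "potential_curvature m n d a (\<lambda>k j. (s(i := y)) k j - s k j) =
        (\<Sum>j<n. a * (y j - s i j)\<^sup>2 / d j)"
  proof -
    have "((s(i := y)) k j - s k j)\<^sup>2 = (if k = i then (y j - s i j)\<^sup>2 else 0)" for k j
      by simp
    then show ?thesis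
      using assms unfolding potential_curvature_def borrowed_def row
      by (intro sum.cong) (simp_all add: field_simps)
  qed
  ultimately show ?thesis
    using potential_expansion[OF assms(2), of m a "s(i := y)" s] by simp
qed

lemma utility_update:
  assumes "i < m" and "\<forall>j<n. d j \<noteq> 0"
  shows "utility m n d rmax rmin (s(i := y)) i - utility m n d rmax rmin s i =
           marginal_gain m n d (rmax - rmin) s i (\<lambda>j. y j - s i j)
           - (\<Sum>j<n. (rmax - rmin) * (y j - s i j)\<^sup>2 / d j)"
proof -
  have "(interest_rate m d rmax rmin (s(i := y)) j - rmin) * y j
          - (interest_rate m d rmax rmin s j - rmin) * s i j =
        (y j - s i j) * ((rmax - rmin) - (rmax - rmin) * (borrowed m s j + s i j) / d j)
          - (rmax - rmin) * (y j - s i j)\<^sup>2 / d j" if "j < n" for j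
    using assms that
    by (simp add: interest_rate_borrowed borrowed_update field_simps power2_eq_square)
  then show ?thesis
    unfolding utility_def marginal_gain_def sum_subtractf[symmetric]
    by (intro sum.cong) simp_all
qed

lemma utility_update_eq_potential_update:
  assumes "i < m" and "\<forall>j<n. d j \<noteq> 0"
  shows "utility m n d rmax rmin (s(i := y)) i - utility m n d rmax rmin s i =
           potential m n d (rmax - rmin) (s(i := y)) - potential m n d (rmax - rmin) s"
  using utility_update[OF assms] potential_update[OF assms] by simp

lemma strategy_convex:
  assumes "strategy n c x" and "strategy n c y" and "0 \<le> t" and "t \<le> 1"
  shows "strategy n c (\<lambda>j. x j + t * (y j - x j))"
proof -
  have convex_comb: "x j + t * (y j - x j) = (1 - t) * x j + t * y j" for j
    by (simp add: algebra_simps)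
  have "(\<Sum>j<n. (1 - t) * x j + t * y j) = (1 - t) * (\<Sum>j<n. x j) + t * (\<Sum>j<n. y j)"
    by (simp add: sum.distrib sum_distrib_left)
  also have "\<dots> \<le> c"
    using assms by (intro convex_bound_le) (auto simp: strategy_def)
  finally show ?thesis
    using assms unfolding strategy_def convex_comb by auto
qed

lemma profile_space_outside:
  assumes "s \<in> profile_space m n c" and "\<not> (i < m \<and> j < n)"
  shows "s i j = 0"
  using assms by (cases "i < m") (auto simp: profile_space_def strategy_def)

lemma nonpos_if_le_small_multiples:
  fixes g q :: real
  assumes "\<And>t. 0 < t \<Longrightarrow> t \<le> 1 \<Longrightarrow> g \<le> t * q"
  shows "g \<le> 0"
proof (cases "q > 0")
  case True
  show ?thesis
  proof (rule field_le_epsilon)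
    fix e :: real
    assume "e > 0"
    then have "g \<le> min 1 (e / q) * q"
      using True assms by simp
    also have "\<dots> \<le> e"
      using True \<open>e > 0\<close> by (simp add: min_mult_distrib_right)
    finally show "g \<le> 0 + e"
      by simp
  qed
next
  case False
  then show ?thesis
    using assms[of 1] by simp
qed

lemma pure_nash_first_order:
  assumes ne: "pure_nash m n c d rmax rmin s" and s': "s' \<in> profile_space m n c"
    and i: "i < m" and d: "\<forall>j<n. d j \<noteq> 0"
  shows "marginal_gain m n d (rmax - rmin) s i (\<lambda>j. s' i j - s i j) \<le> 0"
proof (rule nonpos_if_le_small_multiples)
  fix t :: real
  assume t: "0 < t" "t \<le> 1"
  define a where "a = rmax - rmin"
  define v where "v j = s' i j - s i j" for j
  define y where "y j = s i j + t * v j" for j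
  have "strategy n (c i) (s i)" and "strategy n (c i) (s' i)"
    using ne s' i by (auto simp: pure_nash_def profile_space_def)
  then have "strategy n (c i) y"
    unfolding y_def v_def using t by (intro strategy_convex) simp_all
  then have "utility m n d rmax rmin (s(i := y)) i - utility m n d rmax rmin s i \<le> 0"
    using ne i unfolding pure_nash_def by simp
  moreover have "y j - s i j = t * v j" for j
    by (simp add: y_def)
  moreover have "marginal_gain m n d a s i (\<lambda>j. t * v j) = t * marginal_gain m n d a s i v"
    by (simp add: marginal_gain_def sum_distrib_left mult.assoc)
  moreover have "(\<Sum>j<n. a * (t * v j)\<^sup>2 / d j) = t\<^sup>2 * (\<Sum>j<n. a * (v j)\<^sup>2 / d j)"
    by (simp add: sum_distrib_left power_mult_distrib mult_ac)
  ultimately have "t * marginal_gain m n d a s i v \<le> t\<^sup>2 * (\<Sum>j<n. a * (v j)\<^sup>2 / d j)"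
    using utility_update[OF i, of n d rmax rmin s y] d by (simp add: a_def)
  then show "marginal_gain m n d (rmax - rmin) s i v \<le> t * (\<Sum>j<n. a * (v j)\<^sup>2 / d j)"
    using t by (simp add: a_def power2_eq_square)
qed

lemma pure_nash_potential_bound:
  assumes "pure_nash m n c d rmax rmin s" and "s' \<in> profile_space m n c"
    and "\<forall>j<n. d j \<noteq> 0"
  shows "potential m n d (rmax - rmin) s' \<le>
           potential m n d (rmax - rmin) s
           - potential_curvature m n d (rmax - rmin) (\<lambda>i j. s' i j - s i j)"
proof -
  have "(\<Sum>i<m. marginal_gain m n d (rmax - rmin) s i (\<lambda>j. s' i j - s i j)) \<le> 0"
    using pure_nash_first_order[OF assms(1,2) _ assms(3)] by (intro sum_nonpos) simp
  then show ?thesis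
    using potential_expansion[OF assms(3), of m "rmax - rmin" s' s] by simp
qed

lemma pure_nash_unique:
  assumes ne: "pure_nash m n c d rmax rmin s" "pure_nash m n c d rmax rmin s'"
    and d: "\<forall>j<n. d j > 0" and r: "rmin < rmax"
  shows "s = s'"
proof -
  let ?P = "potential m n d (rmax - rmin)" and ?C = "potential_curvature m n d (rmax - rmin)"
  have in_space: "s \<in> profile_space m n c" "s' \<in> profile_space m n c"
    using ne by (simp_all add: pure_nash_def)
  have d': "\<forall>j<n. d j \<noteq> 0"
    using d by auto
  have "?P s' \<le> ?P s - ?C (\<lambda>i j. s' i j - s i j)"
    and "?P s \<le> ?P s' - ?C (\<lambda>i j. s i j - s' i j)"
    using pure_nash_potential_bound[OF ne(1) in_space(2) d']
      pure_nash_potential_bound[OF ne(2) in_space(1) d']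
    by simp_all
  moreover have "?C (\<lambda>i j. s' i j - s i j) \<ge> 0" and "?C (\<lambda>i j. s i j - s' i j) \<ge> 0"
    using r d by (simp_all add: potential_curvature_nonneg)
  ultimately have "?C (\<lambda>i j. s' i j - s i j) = 0"
    by linarith
  then have "s' i j - s i j = 0" if "i < m" "j < n" for i j
    using potential_curvature_eq_0D[of "rmax - rmin" n d m "\<lambda>i j. s' i j - s i j"] r d that
    by simp
  moreover have "s i j = 0" and "s' i j = 0" if "\<not> (i < m \<and> j < n)" for i j
    using profile_space_outside[OF in_space(1) that] profile_space_outside[OF in_space(2) that]
    by simp_all
  ultimately show ?thesis
    by (metis ext eq_iff_diff_eq_0)
qed

lemma continuous_on_entry [continuous_intros]:
  "continuous_on A (\<lambda>s :: nat \<Rightarrow> nat \<Rightarrow> real. s i j)"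
proof -
  have "continuous_on UNIV (\<lambda>s :: nat \<Rightarrow> nat \<Rightarrow> real. s i j)"
    by (rule continuous_on_product_then_coordinatewise) simp
  then show ?thesis
    by (rule continuous_on_subset) simp
qed

lemma compact_PiE_UNIV:
  assumes "\<And>i. compact (S i)"
  shows "compact (PiE UNIV S :: ('a \<Rightarrow> 'b :: topological_space) set)"
  using compactin_PiE[of "\<lambda>i. euclidean" UNIV S] assms
  by (simp add: euclidean_product_topology)

lemma closed_profile_space: "closed (profile_space m n c)"
  unfolding profile_space_def strategy_def
  by (intro closed_Collect_conj closed_Collect_all closed_Collect_imp open_Collect_const
      closed_Collect_le closed_Collect_eq continuous_intros)

lemma profile_space_subset_box:
  "profile_space m n c \<subseteq> PiE UNIV (\<lambda>i. PiE UNIV (\<lambda>j. {0..\<bar>c i\<bar>}))"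
proof
  fix s
  assume s: "s \<in> profile_space m n c"
  have "s i j \<in> {0..\<bar>c i\<bar>}" for i j
  proof (cases "i < m \<and> j < n")
    case True
    then have "strategy n (c i) (s i)"
      using s by (simp add: profile_space_def)
    moreover from this have "s i j \<le> (\<Sum>j<n. s i j)"
      using True by (intro member_le_sum) (auto simp: strategy_def)
    ultimately show ?thesis
      using True by (auto simp: strategy_def)
  next
    case False
    then show ?thesis
      using profile_space_outside[OF s] by simp
  qed
  then show "s \<in> PiE UNIV (\<lambda>i. PiE UNIV (\<lambda>j. {0..\<bar>c i\<bar>}))"
    by (simp add: PiE_UNIV_domain)
qed

lemma compact_profile_space: "compact (profile_space m n c)"
proof -
  have "compact (PiE UNIV (\<lambda>i. PiE UNIV (\<lambda>j. {0..\<bar>c i\<bar>})) \<inter> profile_space m n c)"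
    by (intro compact_Int_closed compact_PiE_UNIV compact_Icc closed_profile_space)
  then show ?thesis
    using profile_space_subset_box by (simp add: Int_absorb1)
qed

lemma potential_maximizer_is_pure_nash:
  assumes "s \<in> profile_space m n c" and "\<forall>j<n. d j \<noteq> 0"
    and maximal: "\<And>s'. s' \<in> profile_space m n c \<Longrightarrow>
      potential m n d (rmax - rmin) s' \<le> potential m n d (rmax - rmin) s"
  shows "pure_nash m n c d rmax rmin s"
  unfolding pure_nash_def
proof (intro conjI allI impI assms(1))
  fix i y
  assume "i < m" and "strategy n (c i) y"
  then have "s(i := y) \<in> profile_space m n c"
    using assms(1) by (simp add: profile_space_def)
  then show "utility m n d rmax rmin (s(i := y)) i \<le> utility m n d rmax rmin s i"
    using maximal utility_update_eq_potential_update[OF \<open>i < m\<close> assms(2), of rmax rmin s y]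
    by fastforce
qed

lemma pure_nash_exists:
  assumes "\<forall>i<m. c i \<ge> 0" and "\<forall>j<n. d j \<noteq> 0"
  shows "\<exists>s. pure_nash m n c d rmax rmin s"
proof -
  have "(\<lambda>i j. 0) \<in> profile_space m n c"
    using assms(1) by (simp add: profile_space_def strategy_def)
  moreover have "continuous_on (profile_space m n c) (potential m n d (rmax - rmin))"
    unfolding potential_def borrowed_def by (intro continuous_intros)
  ultimately obtain s where "s \<in> profile_space m n c"
    and "\<And>s'. s' \<in> profile_space m n c \<Longrightarrow>
      potential m n d (rmax - rmin) s' \<le> potential m n d (rmax - rmin) s"
    using continuous_attains_sup[OF compact_profile_space] by blast
  then show ?thesis
    using potential_maximizer_is_pure_nash assms(2) by blast
qed

theorem theorem3p3:
  fixes m n :: nat and c d :: "nat \<Rightarrow> real" and rmax rmin :: real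
  assumes "m > 0" and "n > 0"
    and "\<forall>i<m. c i > 0" and "\<forall>j<n. d j > 0"
    and "0 < rmin" and "rmin < rmax"
  shows "\<exists>!s. pure_nash m n c d rmax rmin s"
proof (rule ex_ex1I)
  show "\<exists>s. pure_nash m n c d rmax rmin s"
    using assms(3,4) by (intro pure_nash_exists) auto
  show "s = s'" if "pure_nash m n c d rmax rmin s" and "pure_nash m n c d rmax rmin s'" for s s'
    using pure_nash_unique[OF that] assms(4,6) .
qed

end
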